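(* Let $k$ be any field, $A=kQ_A/I_A$ a monomial algebra with vertices $e_1,\dots,e_n$, and $B$ the algebra obtained by gluing the distinct non-isolated vertices $e_1,e_n$. Then $\mathrm{kspp}(1,n)\ge\mathrm{sp}(1,n)$. In particular, the number of special pairs is at least the number of special paths.
   Context: Monomial algebra: $A=kQ_A/I_A$, $Q_A$ finite quiver, $I_A$ admissible, generated by a minimal set $Z_A$ of paths of length $\ge2$; $\mathcal B_A$: paths (including trivial ones) avoiding elements of $Z_A$ as subpaths. Gluing: $B\subseteq A$ generated by $f_1=e_1+e_n$, $f_i=e_i$ ($2\le i\le n-1$) and all arrows; $B\cong kQ_B/I_B$, $Q_B$ obtained by identifying $e_1,e_n$ to $f_1$ (arrow $\alpha\mapsto\alpha^*$, path $p=a_m\cdots a_1\mapsto p^*=a_m^*\cdots a_1^*$, $e_1^*=e_n^*=f_1$), $I_B$ generated by $Z_B=\{r^*:r\in Z_A\}\cup\{b^*c^*: b,c\text{ arrows},\ t(c),s(b)\in\{e_1,e_n\},\ t(c)\ne s(b)\}$; $\mathcal B_B$ its basis paths. For path sets $X,Y$, $k(X\|Y)$ has basis the pairs $x\|y$ of parallel paths. For monomial $\Lambda=kQ/\langle Z\rangle$ with basis paths $\mathcal B$: $\delta^0(e\|\gamma)=\sum_{a\in Q_1,s(a)=e,a\gamma\in\mathcal B}a\|a\gamma-\sum_{a\in Q_1,t(a)=e,\gamma a\in\mathcal B}a\|\gamma a$; $\delta^1(a\|\gamma)=\sum_{r\in Z}r\|r^{a\|\gamma}$, where $r^{a\|\gamma}$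 is the sum over occurrences of $a$ in $r$ of the path obtained by replacing that occurrence by $\gamma$, keeping only paths in $\mathcal B$; subscripts $A,B$ indicate the algebra. A special path is a $p\in\mathcal B_A$ from $e_1$ to $e_n$ or from $e_n$ to $e_1$ with $\delta^0_B(f_1\|p^* )\ne0$ (equivalently $ap\notin I_A$ or $pa\notin I_A$ for some arrow $a$); $\mathrm{sp}(1,n)$ is their number. A special pair is $(\alpha,p)$, $\alpha$ an arrow starting or ending at $e_1$ or $e_n$, $p\in\mathcal B_A$, $\alpha^*$ parallel to $p^*$ in $Q_B$ but $\alpha$ not parallel to $p$ in $Q_A$. $Z_{spp}$ is the intersection of $\mathrm{Ker}\,\delta^1_B$ with the span of the $\alpha^*\|p^*$ over special pairs, and $\mathrm{kspp}(1,n)=\dim_kZ_{spp}$. *)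

theory Defs
  imports Complex_Main "HOL-Library.Sublist" "HOL-Library.Function_Algebras"
begin

text \<open>Convention: the list is written in order of traversal, so the path a_m ... a_1 of the paper
  (a_1 traversed first) is the list [a_1, ..., a_m].\<close>

datatype ('v, 'a) qpath = Triv 'v | NT "'a list"

definition valid_path ::
  "'v set \<Rightarrow> 'a set \<Rightarrow> ('a \<Rightarrow> 'v) \<Rightarrow> ('a \<Rightarrow> 'v) \<Rightarrow> ('v, 'a) qpath \<Rightarrow> bool" where
  "valid_path V E s t p = (case p of
      Triv v \<Rightarrow> v \<in> V
    | NT l \<Rightarrow> l \<noteq> [] \<and> set l \<subseteq> E \<and> (\<forall>i. Suc i < length l \<longrightarrow> t (l ! i) = s (l ! Suc i)))"

fun psrc :: "('a \<Rightarrow> 'v) \<Rightarrow> ('v, 'a) qpath \<Rightarrow> 'v" where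
  "psrc s (Triv v) = v"
| "psrc s (NT l) = s (hd l)"

fun ptgt :: "('a \<Rightarrow> 'v) \<Rightarrow> ('v, 'a) qpath \<Rightarrow> 'v" where
  "ptgt t (Triv v) = v"
| "ptgt t (NT l) = t (last l)"

fun plen :: "('v, 'a) qpath \<Rightarrow> nat" where
  "plen (Triv v) = 0"
| "plen (NT l) = length l"

text \<open>r occurs as a subpath of p (only used for nontrivial r).\<close>
fun subpath :: "('v, 'a) qpath \<Rightarrow> ('v, 'a) qpath \<Rightarrow> bool" where
  "subpath (NT l) (NT l') = sublist l l'"
| "subpath (Triv v) p = False"
| "subpath (NT l) (Triv v) = False"

text \<open>Concatenations: (arrow after path) a\<gamma> and (path after arrow) \<gamma>a.\<close>
fun arrow_after :: "'a \<Rightarrow> ('v, 'a) qpath \<Rightarrow> ('v, 'a) qpath" where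
  "arrow_after a (Triv v) = NT [a]"
| "arrow_after a (NT l) = NT (l @ [a])"

fun arrow_before :: "('v, 'a) qpath \<Rightarrow> 'a \<Rightarrow> ('v, 'a) qpath" where
  "arrow_before (Triv v) a = NT [a]"
| "arrow_before (NT l) a = NT (a # l)"

text \<open>kQ/\<langle>Z\<rangle> with Z a minimal set of paths of length \<ge> 2 generating an admissible ideal.\<close>
definition monomial_data ::
  "'v set \<Rightarrow> 'a set \<Rightarrow> ('a \<Rightarrow> 'v) \<Rightarrow> ('a \<Rightarrow> 'v) \<Rightarrow> ('v, 'a) qpath set \<Rightarrow> bool" where
  "monomial_data V E s t Z \<longleftrightarrow>
     finite V \<and> finite E \<and> (\<forall>a\<in>E. s a \<in> V \<and> t a \<in> V) \<and>
     finite Z \<and>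
     (\<forall>r\<in>Z. valid_path V E s t r \<and> plen r \<ge> 2) \<and>
     (\<forall>r\<in>Z. \<forall>r'\<in>Z. subpath r r' \<longrightarrow> r = r') \<and>
     (\<exists>m. \<forall>p. valid_path V E s t p \<and> plen p \<ge> m \<longrightarrow> (\<exists>r\<in>Z. subpath r p))"

definition basis_paths ::
  "'v set \<Rightarrow> 'a set \<Rightarrow> ('a \<Rightarrow> 'v) \<Rightarrow> ('a \<Rightarrow> 'v) \<Rightarrow> ('v, 'a) qpath set \<Rightarrow> ('v, 'a) qpath set" where
  "basis_paths V E s t Z = {p. valid_path V E s t p \<and> \<not> (\<exists>r\<in>Z. subpath r p)}"

text \<open>Elements of k(Q_1 || B) are functions on pairs (arrow, path) with values in the field;
  elements of k(Z || B) are functions on pairs (relation, path).\<close>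

definition delta0 ::
  "'a set \<Rightarrow> ('a \<Rightarrow> 'v) \<Rightarrow> ('a \<Rightarrow> 'v) \<Rightarrow> ('v, 'a) qpath set \<Rightarrow> 'v \<Rightarrow> ('v, 'a) qpath
     \<Rightarrow> ('a \<times> ('v, 'a) qpath) \<Rightarrow> 'k::field" where
  "delta0 E s t Bs e \<gamma> = (\<lambda>(a, q).
      (if a \<in> E \<and> s a = e \<and> q = arrow_after a \<gamma> \<and> q \<in> Bs then 1 else 0)
    - (if a \<in> E \<and> t a = e \<and> q = arrow_before \<gamma> a \<and> q \<in> Bs then 1 else 0))"

definition replace_at :: "'a list \<Rightarrow> nat \<Rightarrow> ('v, 'a) qpath \<Rightarrow> ('v, 'a) qpath" where
  "replace_at r i \<gamma> = (case \<gamma> of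
      NT l \<Rightarrow> NT (take i r @ l @ drop (Suc i) r)
    | Triv v \<Rightarrow> (if take i r @ drop (Suc i) r = [] then Triv v
                 else NT (take i r @ drop (Suc i) r)))"

definition occ_coeff ::
  "('v, 'a) qpath set \<Rightarrow> ('v, 'a) qpath \<Rightarrow> ('v, 'a) qpath \<Rightarrow> 'a \<Rightarrow> ('v, 'a) qpath \<Rightarrow> nat" where
  "occ_coeff Bs r q a \<gamma> = (case r of
      Triv v \<Rightarrow> 0
    | NT l \<Rightarrow> card {i. i < length l \<and> l ! i = a \<and> replace_at l i \<gamma> = q \<and> q \<in> Bs})"

text \<open>\<delta>^1 applied to a finitely supported element c of k(Q_1 || B) (extended linearly).\<close>
definition delta1 ::
  "('v, 'a) qpath set \<Rightarrow> ('v, 'a) qpath set \<Rightarrow> ('a \<times> ('v, 'a) qpath \<Rightarrow> 'k::field)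
     \<Rightarrow> (('v, 'a) qpath \<times> ('v, 'a) qpath \<Rightarrow> 'k)" where
  "delta1 Z Bs c = (\<lambda>(r, q). if r \<in> Z then
      (\<Sum>x\<in>{x. c x \<noteq> 0}. c x * of_nat (occ_coeff Bs r q (fst x) (snd x))) else 0)"

text \<open>A has vertices {1..n}; B is obtained by identifying vertex n with vertex 1 (= f_1).
  The arrows of Q_B are the arrows \<alpha>* of Q_A (same arrow set, glued endpoints).\<close>

definition glue :: "nat \<Rightarrow> nat \<Rightarrow> nat" where
  "glue n v = (if v = n then 1 else v)"

fun pstar :: "nat \<Rightarrow> (nat, 'a) qpath \<Rightarrow> (nat, 'a) qpath" where
  "pstar n (Triv v) = Triv (glue n v)"
| "pstar n (NT l) = NT l"

definition Z_B :: "nat \<Rightarrow> 'a set \<Rightarrow> ('a \<Rightarrow> nat) \<Rightarrow> ('a \<Rightarrow> nat) \<Rightarrow> (nat, 'a) qpath set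
     \<Rightarrow> (nat, 'a) qpath set" where
  "Z_B n E s t Z = pstar n ` Z \<union>
     {NT [c, b] | b c. b \<in> E \<and> c \<in> E \<and> t c \<in> {1, n} \<and> s b \<in> {1, n} \<and> t c \<noteq> s b}"

definition B_B :: "nat \<Rightarrow> 'a set \<Rightarrow> ('a \<Rightarrow> nat) \<Rightarrow> ('a \<Rightarrow> nat) \<Rightarrow> (nat, 'a) qpath set
     \<Rightarrow> (nat, 'a) qpath set" where
  "B_B n E s t Z = basis_paths {1..n-1} E (glue n \<circ> s) (glue n \<circ> t) (Z_B n E s t Z)"

definition special_path :: "'k::field itself \<Rightarrow> nat \<Rightarrow> 'a set \<Rightarrow> ('a \<Rightarrow> nat) \<Rightarrow> ('a \<Rightarrow> nat)
     \<Rightarrow> (nat, 'a) qpath set \<Rightarrow> (nat, 'a) qpath \<Rightarrow> bool" where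
  "special_path TYPE('k) n E s t Z p \<longleftrightarrow>
     p \<in> basis_paths {1..n} E s t Z \<and>
     ((psrc s p = 1 \<and> ptgt t p = n) \<or> (psrc s p = n \<and> ptgt t p = 1)) \<and>
     (delta0 E (glue n \<circ> s) (glue n \<circ> t) (B_B n E s t Z) 1 (pstar n p) :: _ \<Rightarrow> 'k) \<noteq> (\<lambda>_. 0)"

definition sp :: "'k::field itself \<Rightarrow> nat \<Rightarrow> 'a set \<Rightarrow> ('a \<Rightarrow> nat) \<Rightarrow> ('a \<Rightarrow> nat)
     \<Rightarrow> (nat, 'a) qpath set \<Rightarrow> nat" where
  "sp TYPE('k) n E s t Z = card {p. special_path TYPE('k) n E s t Z p}"

definition special_pair :: "nat \<Rightarrow> 'a set \<Rightarrow> ('a \<Rightarrow> nat) \<Rightarrow> ('a \<Rightarrow> nat)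
     \<Rightarrow> (nat, 'a) qpath set \<Rightarrow> 'a \<Rightarrow> (nat, 'a) qpath \<Rightarrow> bool" where
  "special_pair n E s t Z \<alpha> p \<longleftrightarrow>
     \<alpha> \<in> E \<and> (s \<alpha> \<in> {1, n} \<or> t \<alpha> \<in> {1, n}) \<and>
     p \<in> basis_paths {1..n} E s t Z \<and>
     glue n (s \<alpha>) = psrc (glue n \<circ> s) (pstar n p) \<and> glue n (t \<alpha>) = ptgt (glue n \<circ> t) (pstar n p) \<and>
     \<not> (s \<alpha> = psrc s p \<and> t \<alpha> = ptgt t p)"

definition fscale :: "'k::field \<Rightarrow> ('x \<Rightarrow> 'k) \<Rightarrow> ('x \<Rightarrow> 'k)" where
  "fscale c f = (\<lambda>x. c * f x)"

definition Z_spp :: "'k::field itself \<Rightarrow> nat \<Rightarrow> 'a set \<Rightarrow> ('a \<Rightarrow> nat) \<Rightarrow> ('a \<Rightarrow> nat)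
     \<Rightarrow> (nat, 'a) qpath set \<Rightarrow> ('a \<times> (nat, 'a) qpath \<Rightarrow> 'k) set" where
  "Z_spp TYPE('k) n E s t Z =
     {c. (\<forall>x. c x \<noteq> 0 \<longrightarrow> (\<exists>\<alpha> p. special_pair n E s t Z \<alpha> p \<and> x = (\<alpha>, pstar n p))) \<and>
         delta1 (Z_B n E s t Z) (B_B n E s t Z) c = (\<lambda>_. 0)}"

definition kspp :: "'k::field itself \<Rightarrow> nat \<Rightarrow> 'a set \<Rightarrow> ('a \<Rightarrow> nat) \<Rightarrow> ('a \<Rightarrow> nat)
     \<Rightarrow> (nat, 'a) qpath set \<Rightarrow> nat" where
  "kspp TYPE('k) n E s t Z = vector_space.dim (fscale :: 'k \<Rightarrow> _) (Z_spp TYPE('k) n E s t Z)"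

end

theory Submission
  imports Defs "HOL-Library.Disjoint_Sets"
begin

text \<open>Let p be a special path, say from e_1 to e_n. Then \<delta>^0_B(f_1 || p) is the signed sum of the
  a || pa and a || ap over the arrows a extending p inside B, and each of these pairs is special
  because p joins the two glued vertices. It is a cocycle: the coefficient of r || q in its image
  under \<delta>^1_B counts the insertions of p into r after an arrow minus those before an arrow, and
  this telescopes to zero since inserting p at either end of r yields a path containing r.
  Distinct special paths give elements with disjoint nonempty supports, hence linearly
  independent elements of Z_spp, and picking one support element for each special path injects
  special paths into special pairs.\<close>

section \<open>Paths avoiding relations\<close>

lemma valid_path_NT_iff:
  "valid_path V E s t (NT l) \<longleftrightarrow> l \<noteq> [] \<and> set l \<subseteq> E \<and> successively (\<lambda>x y. t x = s y) l"
  by (simp add: valid_path_def successively_conv_nth)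

lemma successively_sublist: "successively P L \<Longrightarrow> sublist M L \<Longrightarrow> successively P M"
  by (auto simp: sublist_def successively_append_iff)

lemma successively_adjacent_mono:
  "successively R l \<Longrightarrow> (\<And>x y. sublist [x, y] l \<Longrightarrow> R x y \<Longrightarrow> R' x y) \<Longrightarrow> successively R' l"
proof (induction R l rule: successively.induct)
  case (3 R x y xs)
  have "sublist [x, y] (x # y # xs)"
    by (metis append_Cons append_Nil sublist_appendI)
  moreover have "sublist [a, b] (x # y # xs)" if "sublist [a, b] (y # xs)" for a b
    using that by (meson sublist_Cons_right)
  ultimately show ?case using 3 by auto
qed auto

lemma basis_paths_sublist:
  assumes "NT L \<in> basis_paths V E s t Z" "sublist M L" "M \<noteq> []"
  shows "NT M \<in> basis_paths V E s t Z"
proof -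
  have "\<not> subpath r (NT M)" if "r \<in> Z" for r
  proof
    assume "subpath r (NT M)"
    then obtain l where "r = NT l" "sublist l M" by (cases r) auto
    then have "subpath r (NT L)" using assms(2) sublist_order.order_trans by auto
    then show False using assms(1) that by (auto simp: basis_paths_def)
  qed
  with assms set_mono_sublist[OF assms(2)] show ?thesis
    by (auto simp: basis_paths_def valid_path_NT_iff intro: successively_sublist)
qed

lemma finite_basis_paths:
  assumes "monomial_data V E s t Z"
  shows "finite (basis_paths V E s t Z)"
proof -
  obtain m where long_paths: "\<And>p. valid_path V E s t p \<and> plen p \<ge> m \<Longrightarrow> \<exists>r\<in>Z. subpath r p"
    using assms unfolding monomial_data_def by blast
  have "basis_paths V E s t Z \<subseteq> Triv ` V \<union> NT ` {l. set l \<subseteq> E \<and> length l \<le> m}"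
  proof
    fix p assume p: "p \<in> basis_paths V E s t Z"
    then have "\<not> plen p \<ge> m" using long_paths[of p] by (auto simp: basis_paths_def)
    with p show "p \<in> Triv ` V \<union> NT ` {l. set l \<subseteq> E \<and> length l \<le> m}"
      by (cases p) (auto simp: basis_paths_def valid_path_def)
  qed
  moreover have "finite (Triv ` V \<union> NT ` {l. set l \<subseteq> E \<and> length l \<le> m})"
    using assms finite_lists_length_le[of E m] by (simp add: monomial_data_def)
  ultimately show ?thesis by (rule finite_subset)
qed

lemma replace_at_snoc_self:
  "i < length l \<Longrightarrow> replace_at l i (NT (P @ [l ! i])) = NT (take i l @ P @ drop i l)"
  by (simp add: replace_at_def Cons_nth_drop_Suc)

lemma replace_at_Cons_self:
  "i < length l \<Longrightarrow> replace_at l i (NT (l ! i # P)) = NT (take (Suc i) l @ P @ drop (Suc i) l)"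
  by (simp add: replace_at_def take_Suc_conv_app_nth)

section \<open>Functions with disjoint supports\<close>

lemma sum_fun_apply: "(\<Sum>a\<in>A. f a) x = (\<Sum>a\<in>A. f a x)"
  by (induction A rule: infinite_finite_induct) auto

definition support :: "('x \<Rightarrow> 'k::zero) \<Rightarrow> 'x set" where
  "support f = {x. f x \<noteq> 0}"

interpretation fun_space: vector_space "fscale :: 'k::field \<Rightarrow> ('x \<Rightarrow> 'k) \<Rightarrow> 'x \<Rightarrow> 'k"
  by unfold_locales (simp_all add: fscale_def fun_eq_iff algebra_simps)

lemma fun_space_independent_disjoint_supports:
  fixes I :: "('x \<Rightarrow> 'k::field) set"
  assumes nonzero: "0 \<notin> I"
    and disjoint: "\<And>f g. f \<in> I \<Longrightarrow> g \<in> I \<Longrightarrow> f \<noteq> g \<Longrightarrow> support f \<inter> support g = {}"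
  shows "fun_space.independent I"
proof
  assume "fun_space.dependent I"
  then obtain T u f where T: "finite T" "T \<subseteq> I" "(\<Sum>g\<in>T. fscale (u g) g) = 0"
    and f: "f \<in> T" "u f \<noteq> 0"
    unfolding fun_space.dependent_explicit by blast
  have "f \<noteq> 0" using nonzero f(1) T(2) by blast
  then obtain x where x: "f x \<noteq> 0" by (auto simp: fun_eq_iff)
  have "g x = 0" if "g \<in> T - {f}" for g
    using disjoint[of f g] that T(2) f(1) x by (auto simp: support_def)
  then have "(\<Sum>g\<in>T - {f}. u g * g x) = 0" by (intro sum.neutral) auto
  then have "(\<Sum>g\<in>T. fscale (u g) g) x = u f * f x"
    by (simp add: sum_fun_apply fscale_def sum.remove[OF T(1) f(1)])
  with T(3) f(2) x show False by simp
qed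

lemma fun_space_span_finite_support:
  fixes f :: "'x \<Rightarrow> 'k::field"
  assumes "finite S" "support f \<subseteq> S"
  shows "f \<in> fun_space.span ((\<lambda>x y. if y = x then 1 else 0) ` S)"
proof -
  have "f = (\<Sum>x\<in>S. fscale (f x) (\<lambda>y. if y = x then 1 else 0))"
  proof
    fix y
    have "(\<Sum>x\<in>S. fscale (f x) (\<lambda>y. if y = x then 1 else 0)) y = (\<Sum>x\<in>S. if y = x then f x else 0)"
      by (simp add: sum_fun_apply fscale_def if_distrib cong: if_cong)
    also have "\<dots> = f y" using assms by (auto simp: support_def)
    finally show "f y = (\<Sum>x\<in>S. fscale (f x) (\<lambda>y. if y = x then 1 else 0)) y" ..
  qed
  also have "\<dots> \<in> fun_space.span ((\<lambda>x y. if y = x then 1 else 0) ` S)"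
    by (intro fun_space.span_sum fun_space.span_scale fun_space.span_base) auto
  finally show ?thesis .
qed

lemma fun_space_card_le_dim:
  fixes V :: "('x \<Rightarrow> 'k::field) set"
  assumes "finite S" "\<And>f. f \<in> V \<Longrightarrow> support f \<subseteq> S" "I \<subseteq> V" "fun_space.independent I"
  shows "card I \<le> fun_space.dim V"
proof -
  obtain B where B: "I \<subseteq> B" "B \<subseteq> V" "fun_space.independent B" "V \<subseteq> fun_space.span B"
    using fun_space.maximal_independent_subset_extend[OF assms(3,4)] by blast
  have "V \<subseteq> fun_space.span ((\<lambda>x y. if y = x then (1::'k) else 0) ` S)"
    using fun_space_span_finite_support assms(1,2) by blast
  then have "finite B"
    using fun_space.independent_span_bound B(2,3) assms(1) by (meson finite_imageI subset_trans)
  then have "card I \<le> card B" using B(1) by (rule card_mono)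
  also have "card B = fun_space.dim V" using fun_space.basis_card_eq_dim B(2-4) by blast
  finally show ?thesis .
qed

lemma card_le_dim_of_disjoint_supports:
  fixes v :: "'p \<Rightarrow> 'x \<Rightarrow> 'k::field"
  assumes "finite S" "\<And>f. f \<in> V \<Longrightarrow> support f \<subseteq> S" "v ` P \<subseteq> V"
    and nonempty: "\<And>p. p \<in> P \<Longrightarrow> support (v p) \<noteq> {}"
    and disjoint: "disjoint_family_on (\<lambda>p. support (v p)) P"
  shows "card P \<le> fun_space.dim V"
proof -
  have inj: "inj_on v P"
    by (rule inj_onI) (metis Int_absorb disjoint disjoint_family_onD nonempty)
  have "support (v p) \<inter> support (v q) = {}" if "p \<in> P" "q \<in> P" "v p \<noteq> v q" for p q
    using that disjoint by (metis disjoint_family_onD)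
  moreover have "0 \<notin> v ` P"
    using nonempty by (force simp: support_def)
  ultimately have "fun_space.independent (v ` P)"
    by (intro fun_space_independent_disjoint_supports) auto
  then have "card (v ` P) \<le> fun_space.dim V"
    using assms(1-3) by (rule fun_space_card_le_dim[rotated 3])
  with inj show ?thesis by (simp add: card_image)
qed

lemma card_le_card_of_disjoint_family:
  assumes "finite X" "\<And>p. p \<in> P \<Longrightarrow> A p \<noteq> {}" "\<And>p. p \<in> P \<Longrightarrow> A p \<subseteq> X"
    and "disjoint_family_on A P"
  shows "card P \<le> card X"
proof -
  define w where "w p = (SOME x. x \<in> A p)" for p
  have w: "w p \<in> A p" if "p \<in> P" for p
    using assms(2)[OF that] unfolding w_def by (simp add: some_in_eq)
  have "inj_on w P"
    by (rule inj_onI) (metis assms(4) disjoint_family_onD disjoint_iff w)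
  moreover have "w ` P \<subseteq> X" using w assms(3) by blast
  ultimately show ?thesis using assms(1) by (rule card_inj_on_le)
qed

section \<open>Gluing two vertices\<close>

lemma sum_card_fibres:
  fixes N :: nat
  assumes "finite A"
  shows "(\<Sum>a\<in>A. card {i. i < N \<and> f i = a \<and> Q i a}) = card {i. i < N \<and> f i \<in> A \<and> Q i (f i)}"
proof -
  have "{i. i < N \<and> f i \<in> A \<and> Q i (f i)} = (\<Union>a\<in>A. {i. i < N \<and> f i = a \<and> Q i a})"
    by auto
  also have "card \<dots> = (\<Sum>a\<in>A. card {i. i < N \<and> f i = a \<and> Q i a})"
    by (rule card_UN_disjoint) (use assms in auto)
  finally show ?thesis by simp
qed

lemma card_shift_Suc:
  assumes "\<not> G 0" "\<not> G N"
  shows "card {i. i < N \<and> G (Suc i)} = card {i. i < N \<and> G i}"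
proof -
  have "{i. i < N \<and> G i} = Suc ` {i. i < N \<and> G (Suc i)}"
  proof (intro set_eqI iffI)
    fix i assume "i \<in> {i. i < N \<and> G i}"
    with assms have "i = Suc (i - 1)" "i - 1 < N" "G (Suc (i - 1))"
      by (cases i; auto)+
    then show "i \<in> Suc ` {i. i < N \<and> G (Suc i)}" by blast
  next
    fix i assume "i \<in> Suc ` {i. i < N \<and> G (Suc i)}"
    with assms(2) show "i \<in> {i. i < N \<and> G i}" using Suc_lessI by blast
  qed
  then show ?thesis by (simp add: card_image)
qed

lemma delta1_eq_sum_superset:
  fixes c :: "'a \<times> ('v, 'a) qpath \<Rightarrow> 'k::field"
  assumes "finite T" "support c \<subseteq> T"
  shows "delta1 Z Bs c (r, q)
    = (if r \<in> Z then \<Sum>x\<in>T. c x * of_nat (occ_coeff Bs r q (fst x) (snd x)) else 0)"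
  using assms by (auto simp: delta1_def support_def intro!: sum.mono_neutral_left)

locale vertex_gluing =
  fixes n :: nat and E :: "'a set" and s t :: "'a \<Rightarrow> nat" and Z :: "(nat, 'a) qpath set"
  assumes one_neq_n: "1 \<noteq> n" and finite_arrows: "finite E"
begin

abbreviation "ZB \<equiv> Z_B n E s t Z"
abbreviation "BB \<equiv> B_B n E s t Z"
abbreviation "BA \<equiv> basis_paths {1..n} E s t Z"

abbreviation delta0_B :: "(nat, 'a) qpath \<Rightarrow> 'a \<times> (nat, 'a) qpath \<Rightarrow> 'k::field" where
  "delta0_B p \<equiv> delta0 E (glue n \<circ> s) (glue n \<circ> t) BB 1 (pstar n p)"

definition joins_ends :: "'a list \<Rightarrow> bool" where
  "joins_ends P \<longleftrightarrow> P \<noteq> [] \<and> (s (hd P) = 1 \<and> t (last P) = n \<or> s (hd P) = n \<and> t (last P) = 1)"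

lemma joins_endsD:
  "joins_ends P \<Longrightarrow> P \<noteq> [] \<and> s (hd P) \<in> {1, n} \<and> t (last P) \<in> {1, n} \<and> s (hd P) \<noteq> t (last P)"
  using one_neq_n by (auto simp: joins_ends_def)

lemma B_B_not_subpath: "q \<in> BB \<Longrightarrow> r \<in> ZB \<Longrightarrow> \<not> subpath r q"
  by (auto simp: B_B_def basis_paths_def)

lemma B_B_sublist: "NT L \<in> BB \<Longrightarrow> sublist M L \<Longrightarrow> M \<noteq> [] \<Longrightarrow> NT M \<in> BB"
  unfolding B_B_def by (rule basis_paths_sublist)

lemma set_subset_if_B_B: "NT l \<in> BB \<Longrightarrow> set l \<subseteq> E"
  by (auto simp: B_B_def basis_paths_def valid_path_NT_iff)

text \<open>Two arrows composable only after gluing form a relation of Z_B, so nontrivial basis paths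
  of B compose in Q_A.\<close>
lemma basis_paths_if_B_B:
  assumes "NT l \<in> BB"
  shows "NT l \<in> BA"
proof -
  have l: "l \<noteq> []" "set l \<subseteq> E" "successively (\<lambda>x y. glue n (t x) = glue n (s y)) l"
    and avoids: "\<And>r. r \<in> ZB \<Longrightarrow> \<not> subpath r (NT l)"
    using assms by (auto simp: B_B_def basis_paths_def valid_path_NT_iff)
  have "successively (\<lambda>x y. t x = s y) l"
  proof (rule successively_adjacent_mono[OF l(3)])
    fix x y assume xy: "sublist [x, y] l" and glued: "glue n (t x) = glue n (s y)"
    show "t x = s y"
    proof (rule ccontr)
      assume "t x \<noteq> s y"
      with glued have "t x \<in> {1, n}" "s y \<in> {1, n}"
        by (auto simp: glue_def split: if_splits)
      moreover have "x \<in> E" "y \<in> E" using set_mono_sublist[OF xy] l(2) by auto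
      ultimately have "NT [x, y] \<in> ZB" using \<open>t x \<noteq> s y\<close> by (auto simp: Z_B_def)
      with avoids[of "NT [x, y]"] xy show False by simp
    qed
  qed
  moreover have "\<not> subpath r (NT l)" if "r \<in> Z" for r
  proof
    assume sub: "subpath r (NT l)"
    then obtain l' where "r = NT l'" by (cases r) auto
    then have "r \<in> ZB" using that by (force simp: Z_B_def)
    with avoids sub show False by blast
  qed
  ultimately show ?thesis using l by (auto simp: basis_paths_def valid_path_NT_iff)
qed

lemma B_B_snoc_junction: "NT (P @ [a]) \<in> BB \<Longrightarrow> P \<noteq> [] \<Longrightarrow> t (last P) = s a"
  by (drule basis_paths_if_B_B) (auto simp: basis_paths_def valid_path_NT_iff successively_append_iff)

lemma B_B_Cons_junction: "NT (a # P) \<in> BB \<Longrightarrow> P \<noteq> [] \<Longrightarrow> t a = s (hd P)"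
  by (drule basis_paths_if_B_B) (auto simp: basis_paths_def valid_path_NT_iff neq_Nil_conv)

lemma hd_neq_if_snoc_in_B_B: "joins_ends P \<Longrightarrow> NT (P @ [a]) \<in> BB \<Longrightarrow> hd P \<noteq> a"
  using B_B_snoc_junction joins_endsD by fastforce

definition right_extensions :: "'a list \<Rightarrow> 'a set" where
  "right_extensions P = {a. NT (P @ [a]) \<in> BB}"

definition left_extensions :: "'a list \<Rightarrow> 'a set" where
  "left_extensions P = {a. NT (a # P) \<in> BB}"

lemma right_extensions_subset: "right_extensions P \<subseteq> E"
  by (auto simp: right_extensions_def dest: set_subset_if_B_B)

lemma left_extensions_subset: "left_extensions P \<subseteq> E"
  by (auto simp: left_extensions_def dest: set_subset_if_B_B)

lemma right_extensions_glued: "joins_ends P \<Longrightarrow> a \<in> right_extensions P \<Longrightarrow> s a \<in> {1, n}"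
  using B_B_snoc_junction joins_endsD by (fastforce simp: right_extensions_def)

lemma left_extensions_glued: "joins_ends P \<Longrightarrow> a \<in> left_extensions P \<Longrightarrow> t a \<in> {1, n}"
  using B_B_Cons_junction joins_endsD by (fastforce simp: left_extensions_def)

lemma snoc_neq_Cons_if_joins_ends: "joins_ends P \<Longrightarrow> NT (P @ [a]) \<in> BB \<Longrightarrow> P @ [a] \<noteq> a # P"
  using hd_neq_if_snoc_in_B_B joins_endsD by (metis hd_append2 list.sel(1))

lemma delta0_B_snoc:
  assumes "joins_ends P" "a \<in> right_extensions P"
  shows "delta0_B (NT P) (a, NT (P @ [a])) = 1"
proof -
  have "a \<in> E" "glue n (s a) = 1" "NT (P @ [a]) \<in> BB" "P @ [a] \<noteq> a # P"
    using assms right_extensions_subset right_extensions_glued[OF assms] snoc_neq_Cons_if_joins_ends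
    by (auto simp: glue_def right_extensions_def)
  then show ?thesis by (simp add: delta0_def)
qed

lemma delta0_B_Cons:
  assumes "joins_ends P" "a \<in> left_extensions P"
  shows "delta0_B (NT P) (a, NT (a # P)) = -1"
proof -
  have "a \<in> E" "glue n (t a) = 1" "NT (a # P) \<in> BB"
    using assms left_extensions_subset left_extensions_glued[OF assms]
    by (auto simp: glue_def left_extensions_def)
  moreover have "\<not> (P @ [a] = a # P \<and> NT (P @ [a]) \<in> BB)"
    using snoc_neq_Cons_if_joins_ends[OF assms(1)] by blast
  ultimately show ?thesis by (auto simp: delta0_def)
qed

lemma support_delta0_B:
  "support (delta0_B (NT P))
    \<subseteq> (\<lambda>a. (a, NT (P @ [a]))) ` right_extensions P \<union> (\<lambda>a. (a, NT (a # P))) ` left_extensions P"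
  by (auto simp: support_def delta0_def right_extensions_def left_extensions_def split: if_splits)

lemma delta1_delta0_B:
  assumes "joins_ends P" "r \<in> ZB"
  shows "delta1 ZB BB (delta0_B (NT P) :: _ \<Rightarrow> 'k::field) (r, q)
    = of_nat (\<Sum>a\<in>right_extensions P. occ_coeff BB r q a (NT (P @ [a])))
    - of_nat (\<Sum>a\<in>left_extensions P. occ_coeff BB r q a (NT (a # P)))"
proof -
  define R where "R = (\<lambda>a. (a, NT (P @ [a]) :: (nat, 'a) qpath)) ` right_extensions P"
  define L where "L = (\<lambda>a. (a, NT (a # P) :: (nat, 'a) qpath)) ` left_extensions P"
  define occ where "occ x = (of_nat (occ_coeff BB r q (fst x) (snd x)) :: 'k)" for x
  have fin: "finite R" "finite L"
    unfolding R_def L_def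
    using finite_subset[OF right_extensions_subset finite_arrows]
      finite_subset[OF left_extensions_subset finite_arrows] by simp_all
  have disjoint: "R \<inter> L = {}"
    using snoc_neq_Cons_if_joins_ends[OF assms(1)] by (auto simp: R_def L_def right_extensions_def)
  have support: "support (delta0_B (NT P) :: _ \<Rightarrow> 'k) \<subseteq> R \<union> L"
    unfolding R_def L_def by (rule support_delta0_B)
  have "delta1 ZB BB (delta0_B (NT P) :: _ \<Rightarrow> 'k) (r, q) = (\<Sum>x\<in>R \<union> L. delta0_B (NT P) x * occ x)"
    using delta1_eq_sum_superset[OF finite_UnI[OF fin] support] assms(2) by (simp add: occ_def)
  also have "\<dots> = (\<Sum>x\<in>R. delta0_B (NT P) x * occ x) + (\<Sum>x\<in>L. delta0_B (NT P) x * occ x)"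
    by (rule sum.union_disjoint) (use fin disjoint in auto)
  also have "(\<Sum>x\<in>R. delta0_B (NT P) x * occ x) = (\<Sum>a\<in>right_extensions P. occ (a, NT (P @ [a])))"
  proof -
    have "delta0_B (NT P) (a, NT (P @ [a])) = (1::'k)" if "a \<in> right_extensions P" for a
      using delta0_B_snoc[OF assms(1) that] .
    then show ?thesis unfolding R_def by (subst sum.reindex) (auto simp: inj_on_def intro: sum.cong)
  qed
  also have "(\<Sum>x\<in>L. delta0_B (NT P) x * occ x) = - (\<Sum>a\<in>left_extensions P. occ (a, NT (a # P)))"
  proof -
    have "delta0_B (NT P) (a, NT (a # P)) = (-1::'k)" if "a \<in> left_extensions P" for a
      using delta0_B_Cons[OF assms(1) that] .
    then show ?thesis
      unfolding L_def by (subst sum.reindex) (auto simp: inj_on_def sum_negf intro: sum.cong)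
  qed
  finally show ?thesis
    unfolding occ_def of_nat_sum fst_conv snd_conv diff_conv_add_uminus .
qed

lemma sum_occ_coeff_right_extensions:
  "(\<Sum>a\<in>right_extensions P. occ_coeff BB (NT l) q a (NT (P @ [a])))
    = card {i. i < length l \<and> q = NT (take i l @ P @ drop i l) \<and> q \<in> BB}"
proof -
  have "(\<Sum>a\<in>right_extensions P. occ_coeff BB (NT l) q a (NT (P @ [a])))
      = card {i. i < length l \<and> l ! i \<in> right_extensions P
               \<and> replace_at l i (NT (P @ [l ! i])) = q \<and> q \<in> BB}"
    unfolding occ_coeff_def qpath.case
    by (rule sum_card_fibres[OF finite_subset[OF right_extensions_subset finite_arrows]])
  also have "\<dots> = card {i. i < length l \<and> q = NT (take i l @ P @ drop i l) \<and> q \<in> BB}"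
  proof (intro arg_cong[where f = card] Collect_cong)
    fix i
    have "l ! i \<in> right_extensions P" if "i < length l" "NT (take i l @ P @ drop i l) \<in> BB"
    proof -
      have "take i l @ P @ drop i l = take i l @ (P @ [l ! i]) @ drop (Suc i) l"
        using that(1) by (simp add: Cons_nth_drop_Suc)
      then have "sublist (P @ [l ! i]) (take i l @ P @ drop i l)"
        by (metis sublist_appendI)
      then show ?thesis
        using B_B_sublist[OF that(2)] by (simp add: right_extensions_def)
    qed
    then show "(i < length l \<and> l ! i \<in> right_extensions P \<and> replace_at l i (NT (P @ [l ! i])) = q \<and> q \<in> BB)
      \<longleftrightarrow> (i < length l \<and> q = NT (take i l @ P @ drop i l) \<and> q \<in> BB)"
      using replace_at_snoc_self by auto
  qed
  finally show ?thesis .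
qed

lemma sum_occ_coeff_left_extensions:
  "(\<Sum>a\<in>left_extensions P. occ_coeff BB (NT l) q a (NT (a # P)))
    = card {i. i < length l \<and> q = NT (take (Suc i) l @ P @ drop (Suc i) l) \<and> q \<in> BB}"
proof -
  have "(\<Sum>a\<in>left_extensions P. occ_coeff BB (NT l) q a (NT (a # P)))
      = card {i. i < length l \<and> l ! i \<in> left_extensions P
               \<and> replace_at l i (NT (l ! i # P)) = q \<and> q \<in> BB}"
    unfolding occ_coeff_def qpath.case
    by (rule sum_card_fibres[OF finite_subset[OF left_extensions_subset finite_arrows]])
  also have "\<dots> = card {i. i < length l \<and> q = NT (take (Suc i) l @ P @ drop (Suc i) l) \<and> q \<in> BB}"
  proof (intro arg_cong[where f = card] Collect_cong)
    fix i
    have "l ! i \<in> left_extensions P" if "i < length l" "NT (take (Suc i) l @ P @ drop (Suc i) l) \<in> BB"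
    proof -
      have "take (Suc i) l @ P @ drop (Suc i) l = take i l @ (l ! i # P) @ drop (Suc i) l"
        using that(1) by (simp add: take_Suc_conv_app_nth)
      then have "sublist (l ! i # P) (take (Suc i) l @ P @ drop (Suc i) l)"
        by (metis sublist_appendI)
      then show ?thesis
        using B_B_sublist[OF that(2)] by (simp add: left_extensions_def)
    qed
    then show "(i < length l \<and> l ! i \<in> left_extensions P \<and> replace_at l i (NT (l ! i # P)) = q \<and> q \<in> BB)
      \<longleftrightarrow> (i < length l \<and> q = NT (take (Suc i) l @ P @ drop (Suc i) l) \<and> q \<in> BB)"
      using replace_at_Cons_self by auto
  qed
  finally show ?thesis .
qed

theorem delta1_delta0_B_eq_0:
  assumes "joins_ends P"
  shows "delta1 ZB BB (delta0_B (NT P) :: _ \<Rightarrow> 'k::field) = (\<lambda>_. 0)"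
proof
  fix x :: "(nat, 'a) qpath \<times> (nat, 'a) qpath"
  obtain r q where x: "x = (r, q)" by fastforce
  show "delta1 ZB BB (delta0_B (NT P) :: _ \<Rightarrow> 'k) x = 0"
  proof (cases "r \<in> ZB")
    case False
    then show ?thesis by (simp add: x delta1_def)
  next
    case True
    show ?thesis
    proof (cases r)
      case Triv
      then show ?thesis using delta1_delta0_B[OF assms True] by (simp add: x occ_coeff_def)
    next
      case (NT l)
      define G where "G j \<longleftrightarrow> q = NT (take j l @ P @ drop j l) \<and> q \<in> BB" for j
      have "sublist l (P @ l)" "sublist l (l @ P)"
        by (metis append_Nil2 sublist_appendI) (metis append_Nil sublist_appendI)
      then have "\<not> G 0" "\<not> G (length l)"
        using B_B_not_subpath[OF _ True, of "NT (P @ l)"] B_B_not_subpath[OF _ True, of "NT (l @ P)"]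
        by (auto simp: G_def NT)
      then have "card {i. i < length l \<and> G (Suc i)} = card {i. i < length l \<and> G i}"
        by (rule card_shift_Suc)
      then show ?thesis
        using delta1_delta0_B[OF assms True, where q = q]
        by (simp add: x NT G_def sum_occ_coeff_right_extensions sum_occ_coeff_left_extensions)
    qed
  qed
qed

lemma special_path_joins_ends:
  assumes "special_path TYPE('k::field) n E s t Z p"
  obtains P where "p = NT P" "joins_ends P"
proof (cases p)
  case Triv
  then show ?thesis using assms one_neq_n by (auto simp: special_path_def)
next
  case (NT P)
  then show ?thesis
    using assms that by (auto simp: special_path_def basis_paths_def valid_path_NT_iff joins_ends_def)
qed

lemma support_delta0_B_special_pairs:
  assumes "joins_ends P"
  shows "support (delta0_B (NT P) :: _ \<Rightarrow> 'k::field) \<subseteq> {(\<alpha>, q). special_pair n E s t Z \<alpha> q \<and> pstar n q = q}"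
proof
  fix x assume "x \<in> support (delta0_B (NT P) :: _ \<Rightarrow> 'k)"
  then consider a where "a \<in> right_extensions P" "x = (a, NT (P @ [a]))"
    | a where "a \<in> left_extensions P" "x = (a, NT (a # P))"
    using support_delta0_B by blast
  then show "x \<in> {(\<alpha>, q). special_pair n E s t Z \<alpha> q \<and> pstar n q = q}"
  proof cases
    case 1
    then have "NT (P @ [a]) \<in> BB" by (simp add: right_extensions_def)
    then have "NT (P @ [a]) \<in> BA" "t (last P) = s a"
      using basis_paths_if_B_B B_B_snoc_junction joins_endsD[OF assms] by auto
    moreover have "a \<in> E" "s a \<in> {1, n}"
      using right_extensions_subset right_extensions_glued[OF assms 1(1)] 1(1) by auto
    ultimately show ?thesis using 1(2) joins_endsD[OF assms] by (auto simp: special_pair_def glue_def)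
  next
    case 2
    then have "NT (a # P) \<in> BB" by (simp add: left_extensions_def)
    then have "NT (a # P) \<in> BA" "t a = s (hd P)"
      using basis_paths_if_B_B B_B_Cons_junction joins_endsD[OF assms] by auto
    moreover have "a \<in> E" "t a \<in> {1, n}"
      using left_extensions_subset left_extensions_glued[OF assms 2(1)] 2(1) by auto
    ultimately show ?thesis using 2(2) joins_endsD[OF assms] by (auto simp: special_pair_def glue_def)
  qed
qed

lemma support_delta0_B_cases:
  assumes "joins_ends P" "(a, \<gamma>) \<in> support (delta0_B (NT P) :: _ \<Rightarrow> 'k::field)"
  shows "\<gamma> = NT (P @ [a]) \<and> hd P \<noteq> a \<or> \<gamma> = NT (a # P)"
  using assms(2) support_delta0_B[of P] hd_neq_if_snoc_in_B_B[OF assms(1)]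
  by (auto simp: right_extensions_def)

lemma support_delta0_B_disjoint:
  assumes "joins_ends P" "joins_ends P'" "P \<noteq> P'"
  shows "support (delta0_B (NT P) :: _ \<Rightarrow> 'k::field) \<inter> support (delta0_B (NT P') :: _ \<Rightarrow> 'k) = {}"
proof -
  have snoc_neq_Cons: "Q @ [a] \<noteq> a # Q'" if "Q \<noteq> []" "hd Q \<noteq> a" for Q Q' and a :: 'a
    using that by (cases Q) auto
  have False if "(a, \<gamma>) \<in> support (delta0_B (NT P) :: _ \<Rightarrow> 'k)"
    "(a, \<gamma>) \<in> support (delta0_B (NT P') :: _ \<Rightarrow> 'k)" for a \<gamma>
    using support_delta0_B_cases[OF assms(1) that(1)] support_delta0_B_cases[OF assms(2) that(2)]
      snoc_neq_Cons[of P a P'] snoc_neq_Cons[of P' a P]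
      joins_endsD[OF assms(1)] joins_endsD[OF assms(2)] assms(3)
    by auto
  then show ?thesis by fast
qed

lemma delta0_B_in_Z_spp:
  assumes "joins_ends P"
  shows "(delta0_B (NT P) :: _ \<Rightarrow> 'k::field) \<in> Z_spp TYPE('k) n E s t Z"
  unfolding Z_spp_def
proof (intro CollectI conjI allI impI)
  fix x assume "(delta0_B (NT P) :: _ \<Rightarrow> 'k) x \<noteq> 0"
  then have "x \<in> {(\<alpha>, q). special_pair n E s t Z \<alpha> q \<and> pstar n q = q}"
    using support_delta0_B_special_pairs[OF assms, where 'k = 'k] by (auto simp: support_def)
  then show "\<exists>\<alpha> p. special_pair n E s t Z \<alpha> p \<and> x = (\<alpha>, pstar n p)" by force
qed (rule delta1_delta0_B_eq_0[OF assms])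

lemma special_path_delta0_B:
  assumes "special_path TYPE('k::field) n E s t Z p"
  shows "(delta0_B p :: _ \<Rightarrow> 'k) \<in> Z_spp TYPE('k) n E s t Z"
    and "support (delta0_B p :: _ \<Rightarrow> 'k) \<noteq> {}"
    and "support (delta0_B p :: _ \<Rightarrow> 'k) \<subseteq> {(\<alpha>, q). special_pair n E s t Z \<alpha> q}"
proof -
  obtain P where P: "p = NT P" "joins_ends P"
    using special_path_joins_ends[OF assms] .
  show "(delta0_B p :: _ \<Rightarrow> 'k) \<in> Z_spp TYPE('k) n E s t Z"
    using delta0_B_in_Z_spp[OF P(2)] P(1) by simp
  show "support (delta0_B p :: _ \<Rightarrow> 'k) \<noteq> {}"
    using assms by (auto simp: special_path_def support_def fun_eq_iff)
  show "support (delta0_B p :: _ \<Rightarrow> 'k) \<subseteq> {(\<alpha>, q). special_pair n E s t Z \<alpha> q}"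
    using support_delta0_B_special_pairs[OF P(2)] P(1) by auto
qed

lemma special_paths_disjoint_supports:
  "disjoint_family_on (\<lambda>p. support (delta0_B p :: _ \<Rightarrow> 'k::field))
     {p. special_path TYPE('k) n E s t Z p}"
  unfolding disjoint_family_on_def
proof (intro ballI impI)
  fix p p' assume "p \<in> {p. special_path TYPE('k) n E s t Z p}" "p' \<in> {p. special_path TYPE('k) n E s t Z p}"
    and "p \<noteq> p'"
  then obtain P P' where paths: "p = NT P" "p' = NT P'"
    and ends: "joins_ends P" "joins_ends P'" "P \<noteq> P'"
    by (metis mem_Collect_eq special_path_joins_ends)
  from ends have "support (delta0_B (NT P) :: _ \<Rightarrow> 'k) \<inter> support (delta0_B (NT P') :: _ \<Rightarrow> 'k) = {}"
    by (rule support_delta0_B_disjoint)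
  with paths show "support (delta0_B p :: _ \<Rightarrow> 'k) \<inter> support (delta0_B p' :: _ \<Rightarrow> 'k) = {}"
    by simp
qed

lemma support_subset_if_Z_spp:
  "f \<in> Z_spp TYPE('k::field) n E s t Z
    \<Longrightarrow> support f \<subseteq> (\<lambda>(\<alpha>, p). (\<alpha>, pstar n p)) ` {(\<alpha>, p). special_pair n E s t Z \<alpha> p}"
  by (force simp: Z_spp_def support_def)

end

theorem corollary3p23:
  fixes n :: nat and E :: "'a set" and s t :: "'a \<Rightarrow> nat"
    and Z :: "(nat, 'a) qpath set"
  assumes mono: "monomial_data {1..n} E s t Z"
    and distinct: "1 \<noteq> n" and n_vertex: "n \<ge> 1"
    and nonisolated1: "\<exists>a\<in>E. s a = 1 \<or> t a = 1"
    and nonisolatedn: "\<exists>a\<in>E. s a = n \<or> t a = n"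
  shows "kspp TYPE('k::field) n E s t Z \<ge> sp TYPE('k) n E s t Z
       \<and> card {(\<alpha>, p). special_pair n E s t Z \<alpha> p} \<ge> sp TYPE('k) n E s t Z"
proof -
  interpret vertex_gluing n E s t Z
    using distinct mono by unfold_locales (auto simp: monomial_data_def)
  define SP where "SP = {(\<alpha>, p). special_pair n E s t Z \<alpha> p}"
  define Ps where "Ps = {p. special_path TYPE('k) n E s t Z p}"
  have "SP \<subseteq> E \<times> BA" by (auto simp: SP_def special_pair_def)
  then have "finite SP"
    using finite_arrows finite_basis_paths[OF mono] by (auto intro: finite_subset)
  have delta0_B: "(delta0_B p :: _ \<Rightarrow> 'k) \<in> Z_spp TYPE('k) n E s t Z"
    "support (delta0_B p :: _ \<Rightarrow> 'k) \<noteq> {}" "support (delta0_B p :: _ \<Rightarrow> 'k) \<subseteq> SP"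
    if "p \<in> Ps" for p
  proof -
    have "special_path TYPE('k) n E s t Z p" using that by (simp add: Ps_def)
    from special_path_delta0_B[OF this] show "(delta0_B p :: _ \<Rightarrow> 'k) \<in> Z_spp TYPE('k) n E s t Z"
      "support (delta0_B p :: _ \<Rightarrow> 'k) \<noteq> {}" "support (delta0_B p :: _ \<Rightarrow> 'k) \<subseteq> SP"
      by (simp_all add: SP_def)
  qed
  have disjoint: "disjoint_family_on (\<lambda>p. support (delta0_B p :: _ \<Rightarrow> 'k)) Ps"
    unfolding Ps_def by (rule special_paths_disjoint_supports)
  have "card Ps \<le> kspp TYPE('k) n E s t Z"
    unfolding kspp_def
    by (rule card_le_dim_of_disjoint_supports[OF finite_imageI[OF \<open>finite SP\<close>]
          support_subset_if_Z_spp[folded SP_def] _ _ disjoint])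
      (use delta0_B in auto)
  moreover have "card Ps \<le> card SP"
    by (rule card_le_card_of_disjoint_family[OF \<open>finite SP\<close> _ _ disjoint]) (use delta0_B in auto)
  ultimately show ?thesis by (simp add: sp_def Ps_def SP_def)
qed

end
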